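(* Let $n\ge 1$ and let $t_1,\dots,t_n$ be formal variables, with $\bar t_i:=t_i^{-1}$. Let $b=\prod_{\alpha=1}^k\sigma_{i_\alpha}^{s_\alpha}$ be a braid in the braid group $B_n$, written as a word in the standard generators $\sigma_1,\dots,\sigma_{n-1}$ with signs $s_\alpha\in\{+1,-1\}$ (product taken from left to right, i.e. from the bottom of the braid to the top). Let $\tau=[\tau 1,\dots,\tau n]$ be the permutation induced by $b$ (as defined in the context), let $\gamma=\Gamma(b)$ be the Gassner invariant of $b$, and let $\iota=[1,2,\dots,n]$ be the identity permutation. Then $$\Omega(\tau)\,\gamma^{-1}=\bar{\gamma}^T\,\Omega(\iota),\qquad\text{equivalently}\qquad \gamma^{-1}=\Omega(\tau)^{-1}\,\bar\gamma^T\,\Omega(\iota),$$ where $\bar\gamma$ is obtained from $\gamma$ by the substitution $t_i\mapsto t_i^{-1}$ for all $i$, and $\bar\gamma^T$ is its transpose.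
   Context: The braid group $B_n$ has generators $\sigma_1,\dots,\sigma_{n-1}$ and relations $\sigma_i\sigma_j=\sigma_j\sigma_i$ for $|i-j|>1$ and $\sigma_i\sigma_{i+1}\sigma_i=\sigma_{i+1}\sigma_i\sigma_{i+1}$. Strands are indexed $1,\dots,n$ at the bottom of the braid. Reading the word $b=\prod_{\alpha=1}^k\sigma_{i_\alpha}^{s_\alpha}$ from left to right (bottom to top), track which strand occupies each position: initially position $p$ holds strand $p$; the letter $\sigma_{i}^{\pm1}$ is a crossing of the strands at positions $i$ and $i+1$ (as counted just below that crossing), after which these two strands swap positions. For crossing number $\alpha$, let $j_\alpha$ be the index of the over strand: it is the strand at position $i_\alpha$ just below the crossing if $s_\alpha=+1$, and the strand at position $i_\alpha+1$ just below the crossing if $s_\alpha=-1$. The induced permutation $\tau=[\tau1,\dots,\tau n]$ is defined by: after all $k$ crossings (at the top of the braid), position $p$ holds strand $\tau p$. For a variable $t$ and $1\le i\le n-1$, $U_i(t)$ is the $n\times n$ identity matrix with its $2\times2$ block in rows and columns $i,i+1$ replaced by $\begin{pmatrix}1-t&1\\ t&0\end{pmatrix}$; its inverse $U_i^{-1}(t)$ is the identity matrix with that block replaced by $\begin{pmatrix}0&t^{-1}\\ 1&1-t^{-1}\end{pmatrix}$. The Gassner invariant of $b$ is the matrix $\Gamma(b):=\prod_{\alpha=1}^k U_{i_\alpha}^{s_\alpha}(t_{j_\alpha})$ (product from left to right), with entries Laurent polynomials in $t_1,\dots,t_n$ over $\mathbb Z$. For a permutation $\tau=[\tau1,\dots,\tau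 n]$ of $1,\dots,n$, $\Omega(\tau)$ is the lower-triangular $n\times n$ matrix whose diagonal entries are $\Omega(\tau)_{pp}=(1-t_{\tau p})^{-1}$, whose entries below the diagonal are all $1$, and whose entries above the diagonal are all $0$. *)

theory Defs
  imports "Jordan_Normal_Form.Gauss_Jordan_Elimination"
begin

text \<open>A braid word is a list of letters (i, s): the generator sigma_i raised to the
  sign s (s = 1 or s = -1), read from left to right (bottom to top).
  Positions and strands are numbered 1..n.  A matrix index r (0-based, as in
  Jordan_Normal_Form) corresponds to the paper's index r+1.
  Formal variables t_1..t_n are rendered as values t i in an arbitrary field.\<close>

type_synonym braid_word = "(nat \<times> int) list"

definition valid_braid_word :: "nat \<Rightarrow> braid_word \<Rightarrow> bool" where
  "valid_braid_word n w \<longleftrightarrow>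
     (\<forall>(i, s) \<in> set w. 1 \<le> i \<and> i \<le> n - 1 \<and> (s = 1 \<or> s = -1))"

text \<open>Position map after a crossing: pos p = strand at position p.\<close>
definition cross_pos :: "(nat \<Rightarrow> nat) \<Rightarrow> nat \<Rightarrow> (nat \<Rightarrow> nat)" where
  "cross_pos pos i = pos \<circ> Transposition.transpose i (i + 1)"

fun positions_after :: "(nat \<Rightarrow> nat) \<Rightarrow> braid_word \<Rightarrow> (nat \<Rightarrow> nat)" where
  "positions_after pos [] = pos"
| "positions_after pos ((i, s) # w) = positions_after (cross_pos pos i) w"

text \<open>Induced permutation tau: position p at the top holds strand tau p.\<close>
definition induced_perm :: "braid_word \<Rightarrow> nat \<Rightarrow> nat" where
  "induced_perm w = positions_after id w"

definition over_strand :: "(nat \<Rightarrow> nat) \<Rightarrow> nat \<Rightarrow> int \<Rightarrow> nat" where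
  "over_strand pos i s = (if s = 1 then pos i else pos (i + 1))"

text \<open>U_i(x) and U_i^{-1}(x) as n x n matrices (paper indices i, i+1 are
  0-based indices i-1, i).\<close>
definition U_mat :: "nat \<Rightarrow> nat \<Rightarrow> 'a::field \<Rightarrow> 'a mat" where
  "U_mat n i x = mat n n (\<lambda>(r, c).
     if r = i - 1 \<and> c = i - 1 then 1 - x
     else if r = i - 1 \<and> c = i then 1
     else if r = i \<and> c = i - 1 then x
     else if r = i \<and> c = i then 0
     else if r = c then 1 else 0)"

definition U_inv_mat :: "nat \<Rightarrow> nat \<Rightarrow> 'a::field \<Rightarrow> 'a mat" where
  "U_inv_mat n i x = mat n n (\<lambda>(r, c).
     if r = i - 1 \<and> c = i - 1 then 0
     else if r = i - 1 \<and> c = i then inverse x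
     else if r = i \<and> c = i - 1 then 1
     else if r = i \<and> c = i then 1 - inverse x
     else if r = c then 1 else 0)"

definition U_pow :: "nat \<Rightarrow> nat \<Rightarrow> int \<Rightarrow> 'a::field \<Rightarrow> 'a mat" where
  "U_pow n i s x = (if s = 1 then U_mat n i x else U_inv_mat n i x)"

fun gassner_aux :: "nat \<Rightarrow> (nat \<Rightarrow> 'a::field) \<Rightarrow> (nat \<Rightarrow> nat) \<Rightarrow> braid_word \<Rightarrow> 'a mat" where
  "gassner_aux n t pos [] = 1\<^sub>m n"
| "gassner_aux n t pos ((i, s) # w) =
     U_pow n i s (t (over_strand pos i s)) * gassner_aux n t (cross_pos pos i) w"

definition gassner :: "nat \<Rightarrow> (nat \<Rightarrow> 'a::field) \<Rightarrow> braid_word \<Rightarrow> 'a mat" where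
  "gassner n t w = gassner_aux n t id w"

definition Omega :: "nat \<Rightarrow> (nat \<Rightarrow> 'a::field) \<Rightarrow> (nat \<Rightarrow> nat) \<Rightarrow> 'a mat" where
  "Omega n t tau = mat n n (\<lambda>(r, c).
     if r = c then inverse (1 - t (tau (r + 1)))
     else if c < r then 1 else 0)"

end

theory Submission
  imports Defs
begin

text \<open>A crossing \<open>\<sigma>\<^sub>i\<^sup>s\<close> whose over strand carries the variable \<open>x\<close> turns the position
  map \<open>\<pi>\<close> into \<open>\<pi> \<circ> (i i+1)\<close>, and a computation in the \<open>2\<times>2\<close> block \<open>{i, i+1}\<close> shows
  \<open>\<Omega>(\<pi> \<circ> (i i+1)) = U\<^sub>i\<^sup>s(x\<^sup>-\<^sup>1)\<^sup>T \<Omega>(\<pi>) U\<^sub>i\<^sup>s(x)\<close>: each Gassner generator is unitary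
  for the form \<open>\<Omega>\<close>, up to this relabelling of the diagonal. Telescoping along the word
  gives \<open>\<Omega>(\<tau>) = \<Gamma>(b)\<^sup>T \<Omega>(\<iota>) \<Gamma>(b)\<close>, with the left factor taken at the inverted
  variables, and multiplying by \<open>\<Gamma>(b)\<^sup>-\<^sup>1\<close> (a product of invertible generators)
  gives the theorem.\<close>

lemma sum_atLeast0LessThan_two:
  assumes "a < (n::nat)" "b < n" "a \<noteq> b"
    and "\<And>k. k < n \<Longrightarrow> k \<noteq> a \<Longrightarrow> k \<noteq> b \<Longrightarrow> f k = 0"
  shows "sum f {0..<n} = f a + f b"
proof -
  have "sum f {0..<n} = sum f {a, b}"
    by (rule sum.mono_neutral_right) (use assms in auto)
  thus ?thesis using assms by simp
qed

lemma sum_atLeast0LessThan_single: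
  assumes "a < (n::nat)" "\<And>k. k < n \<Longrightarrow> k \<noteq> a \<Longrightarrow> f k = 0"
  shows "sum f {0..<n} = f a"
proof -
  have "sum f {0..<n} = sum f {a}"
    by (rule sum.mono_neutral_right) (use assms in auto)
  thus ?thesis using assms by simp
qed

lemma carrier_U_mat [simp]:
  "U_mat n i x \<in> carrier_mat n n" "U_inv_mat n i x \<in> carrier_mat n n"
  "U_pow n i s x \<in> carrier_mat n n" "Omega n t pos \<in> carrier_mat n n"
  by (auto simp: U_mat_def U_inv_mat_def U_pow_def Omega_def)

lemma dim_U_mat [simp]:
  "dim_row (U_mat n i x) = n" "dim_col (U_mat n i x) = n"
  "dim_row (U_inv_mat n i x) = n" "dim_col (U_inv_mat n i x) = n"
  "dim_row (U_pow n i s x) = n" "dim_col (U_pow n i s x) = n"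
  "dim_row (Omega n t pos) = n" "dim_col (Omega n t pos) = n"
  by (auto simp: U_mat_def U_inv_mat_def U_pow_def Omega_def)

lemma carrier_gassner_aux [simp]: "gassner_aux n t pos w \<in> carrier_mat n n"
  by (induction w arbitrary: pos) (auto intro!: mult_carrier_mat[of _ n n])

lemma mult_U_mat:
  assumes A: "A \<in> carrier_mat n n" and i: "1 \<le> i" "i < n"
  shows "A * U_mat n i x = mat n n (\<lambda>(r, c).
           if c = i - 1 then A $$ (r, i - 1) * (1 - x) + A $$ (r, i) * x
           else if c = i then A $$ (r, i - 1) else A $$ (r, c))"
    (is "_ = ?M")
proof (rule eq_matI)
  fix r c assume "r < dim_row ?M" "c < dim_col ?M"
  hence r: "r < n" and c: "c < n" by auto
  have e: "(A * U_mat n i x) $$ (r, c) = (\<Sum>k\<in>{0..<n}. A $$ (r, k) * U_mat n i x $$ (k, c))"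
    using A r c by (simp add: scalar_prod_def)
  consider "c = i - 1" | "c = i" | "c \<noteq> i - 1" "c \<noteq> i" by blast
  then show "(A * U_mat n i x) $$ (r, c) = ?M $$ (r, c)"
  proof cases
    case 1
    then show ?thesis unfolding e
      by (subst sum_atLeast0LessThan_two[of "i - 1" n i]) (use i r c in \<open>auto simp: U_mat_def\<close>)
  next
    case 2
    then show ?thesis unfolding e
      by (subst sum_atLeast0LessThan_single[of "i - 1" n]) (use i r c in \<open>auto simp: U_mat_def\<close>)
  next
    case 3
    then show ?thesis unfolding e
      by (subst sum_atLeast0LessThan_single[of c n]) (use i r c in \<open>auto simp: U_mat_def\<close>)
  qed
qed (use A in auto)

lemma mult_U_inv_mat:
  assumes A: "A \<in> carrier_mat n n" and i: "1 \<le> i" "i < n"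
  shows "A * U_inv_mat n i x = mat n n (\<lambda>(r, c).
           if c = i - 1 then A $$ (r, i)
           else if c = i then A $$ (r, i - 1) * inverse x + A $$ (r, i) * (1 - inverse x)
           else A $$ (r, c))"
    (is "_ = ?M")
proof (rule eq_matI)
  fix r c assume "r < dim_row ?M" "c < dim_col ?M"
  hence r: "r < n" and c: "c < n" by auto
  have e: "(A * U_inv_mat n i x) $$ (r, c) = (\<Sum>k\<in>{0..<n}. A $$ (r, k) * U_inv_mat n i x $$ (k, c))"
    using A r c by (simp add: scalar_prod_def)
  consider "c = i - 1" | "c = i" | "c \<noteq> i - 1" "c \<noteq> i" by blast
  then show "(A * U_inv_mat n i x) $$ (r, c) = ?M $$ (r, c)"
  proof cases
    case 1
    then show ?thesis unfolding e
      by (subst sum_atLeast0LessThan_single[of i n]) (use i r c in \<open>auto simp: U_inv_mat_def\<close>)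
  next
    case 2
    then show ?thesis unfolding e
      by (subst sum_atLeast0LessThan_two[of "i - 1" n i]) (use i r c in \<open>auto simp: U_inv_mat_def\<close>)
  next
    case 3
    then show ?thesis unfolding e
      by (subst sum_atLeast0LessThan_single[of c n]) (use i r c in \<open>auto simp: U_inv_mat_def\<close>)
  qed
qed (use A in auto)

lemma transpose_U_mat_mult:
  assumes A: "A \<in> carrier_mat n n" and i: "1 \<le> i" "i < n"
  shows "transpose_mat (U_mat n i x) * A = mat n n (\<lambda>(r, c).
           if r = i - 1 then (1 - x) * A $$ (i - 1, c) + x * A $$ (i, c)
           else if r = i then A $$ (i - 1, c) else A $$ (r, c))"
proof -
  have "transpose_mat (U_mat n i x) * A = transpose_mat (transpose_mat A * U_mat n i x)"
    using A by (simp add: transpose_mult[of _ n n _ n])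
  also have "\<dots> = mat n n (\<lambda>(r, c).
           if r = i - 1 then (1 - x) * A $$ (i - 1, c) + x * A $$ (i, c)
           else if r = i then A $$ (i - 1, c) else A $$ (r, c))"
    using A i by (subst mult_U_mat) (auto intro!: eq_matI simp: mult.commute)
  finally show ?thesis .
qed

lemma transpose_U_inv_mat_mult:
  assumes A: "A \<in> carrier_mat n n" and i: "1 \<le> i" "i < n"
  shows "transpose_mat (U_inv_mat n i x) * A = mat n n (\<lambda>(r, c).
           if r = i - 1 then A $$ (i, c)
           else if r = i then inverse x * A $$ (i - 1, c) + (1 - inverse x) * A $$ (i, c)
           else A $$ (r, c))"
proof -
  have "transpose_mat (U_inv_mat n i x) * A = transpose_mat (transpose_mat A * U_inv_mat n i x)"
    using A by (simp add: transpose_mult[of _ n n _ n])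
  also have "\<dots> = mat n n (\<lambda>(r, c).
           if r = i - 1 then A $$ (i, c)
           else if r = i then inverse x * A $$ (i - 1, c) + (1 - inverse x) * A $$ (i, c)
           else A $$ (r, c))"
    using A i by (subst mult_U_inv_mat) (auto intro!: eq_matI simp: mult.commute)
  finally show ?thesis .
qed

lemma Omega_cross_pos_U_mat:
  assumes i: "1 \<le> i" "i < n" and "t (pos i) \<noteq> 0" "t (pos i) \<noteq> 1"
  shows "Omega n t (cross_pos pos i) =
    transpose_mat (U_mat n i (inverse (t (pos i)))) * Omega n t pos * U_mat n i (t (pos i))"
proof -
  have "transpose_mat (U_mat n i (inverse (t (pos i)))) * Omega n t pos * U_mat n i (t (pos i))
      = transpose_mat (U_mat n i (inverse (t (pos i)))) * (Omega n t pos * U_mat n i (t (pos i)))"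
    by (rule assoc_mult_mat[of _ n n _ n _ n]) auto
  also have "\<dots> = Omega n t (cross_pos pos i)"
    unfolding mult_U_mat[OF carrier_U_mat(4) i]
    by (subst transpose_U_mat_mult[OF _ i]) (use assms in
        \<open>auto intro!: eq_matI simp: Omega_def cross_pos_def Transposition.transpose_def field_simps\<close>)
  finally show ?thesis by simp
qed

lemma divide_sub_mult_self:
  assumes "(b::'a::field) \<noteq> 0"
  shows "b / (b - a * b) = 1 / (1 - a)"
proof -
  have "b - a * b = b * (1 - a)" by (simp add: algebra_simps)
  thus ?thesis using assms by simp
qed

lemma Omega_cross_pos_U_inv_mat:
  assumes i: "1 \<le> i" "i < n" and "t (pos (i + 1)) \<noteq> 0" "t (pos (i + 1)) \<noteq> 1"
  shows "Omega n t (cross_pos pos i) =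
    transpose_mat (U_inv_mat n i (inverse (t (pos (i + 1)))))
      * Omega n t pos * U_inv_mat n i (t (pos (i + 1)))"
proof -
  have "transpose_mat (U_inv_mat n i (inverse (t (pos (i + 1))))) * Omega n t pos
          * U_inv_mat n i (t (pos (i + 1)))
      = transpose_mat (U_inv_mat n i (inverse (t (pos (i + 1)))))
          * (Omega n t pos * U_inv_mat n i (t (pos (i + 1))))"
    by (rule assoc_mult_mat[of _ n n _ n _ n]) auto
  also have "\<dots> = Omega n t (cross_pos pos i)"
    unfolding mult_U_inv_mat[OF carrier_U_mat(4) i]
    by (subst transpose_U_inv_mat_mult[OF _ i]) (use assms in
        \<open>auto intro!: eq_matI simp: Omega_def cross_pos_def Transposition.transpose_def
           field_simps divide_sub_mult_self\<close>)
  finally show ?thesis by simp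
qed

lemma Omega_cross_pos_U_pow:
  assumes i: "1 \<le> i" "i < n" and s: "s = 1 \<or> s = -1"
    and "t (over_strand pos i s) \<noteq> 0" "t (over_strand pos i s) \<noteq> 1"
  shows "Omega n t (cross_pos pos i) =
    transpose_mat (U_pow n i s (inverse (t (over_strand pos i s))))
      * Omega n t pos * U_pow n i s (t (over_strand pos i s))"
  using s assms
  by (auto simp: U_pow_def over_strand_def Omega_cross_pos_U_mat Omega_cross_pos_U_inv_mat)

lemma cross_pos_maps_into:
  assumes "\<forall>p\<in>{1..n}. pos p \<in> {1..n}" "1 \<le> i" "i < n"
  shows "\<forall>p\<in>{1..n}. cross_pos pos i p \<in> {1..n}"
  using assms by (auto simp: cross_pos_def Transposition.transpose_def)

lemma over_strand_in:
  assumes "\<forall>p\<in>{1..n}. pos p \<in> {1..n}" "1 \<le> i" "i < n"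
  shows "over_strand pos i s \<in> {1..n}"
  using assms by (simp add: over_strand_def)

lemma transpose_mult_congruence:
  fixes A B C D E :: "'a::comm_semiring_0 mat"
  assumes "A \<in> carrier_mat n n" "B \<in> carrier_mat n n" "C \<in> carrier_mat n n"
    "D \<in> carrier_mat n n" "E \<in> carrier_mat n n"
  shows "transpose_mat D * (transpose_mat B * C * A) * E = transpose_mat (B * D) * C * (A * E)"
  using assms by (simp add: transpose_mult[of B n n D n] assoc_mult_mat[of _ n n _ n _ n])

lemma Omega_positions_after:
  assumes "valid_braid_word n w" and "\<forall>p\<in>{1..n}. pos p \<in> {1..n}"
    and t: "\<forall>i\<in>{1..n}. t i \<noteq> 0 \<and> t i \<noteq> 1"
  shows "Omega n t (positions_after pos w) =
    transpose_mat (gassner_aux n (\<lambda>i. inverse (t i)) pos w) * Omega n t pos * gassner_aux n t pos w"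
  using assms(1,2)
proof (induction w arbitrary: pos)
  case Nil
  then show ?case by simp
next
  case (Cons a w)
  obtain i s where a: "a = (i, s)" by (cases a)
  have i: "1 \<le> i" "i < n" and s: "s = 1 \<or> s = -1" and w: "valid_braid_word n w"
    using Cons.prems(1) a by (auto simp: valid_braid_word_def)
  define x where "x = t (over_strand pos i s)"
  have "x \<noteq> 0" "x \<noteq> 1"
    using t over_strand_in[OF Cons.prems(2) i] by (auto simp: x_def)
  then have step: "Omega n t (cross_pos pos i) =
      transpose_mat (U_pow n i s (inverse x)) * Omega n t pos * U_pow n i s x"
    unfolding x_def by (rule Omega_cross_pos_U_pow[OF i s])
  have "Omega n t (positions_after pos (a # w)) =
      transpose_mat (gassner_aux n (\<lambda>i. inverse (t i)) (cross_pos pos i) w)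
      * Omega n t (cross_pos pos i) * gassner_aux n t (cross_pos pos i) w"
    using Cons.IH[OF w cross_pos_maps_into[OF Cons.prems(2) i]] a by simp
  also have "\<dots> = transpose_mat (gassner_aux n (\<lambda>i. inverse (t i)) pos (a # w))
      * Omega n t pos * gassner_aux n t pos (a # w)"
    unfolding step by (simp add: a x_def transpose_mult_congruence[where n = n])
  finally show ?case .
qed

lemma U_mat_mult_U_inv_mat:
  assumes i: "1 \<le> i" "i < n" and x: "x \<noteq> 0"
  shows "U_mat n i x * U_inv_mat n i x = 1\<^sub>m n" "U_inv_mat n i x * U_mat n i x = 1\<^sub>m n"
proof -
  show "U_mat n i x * U_inv_mat n i x = 1\<^sub>m n"
    unfolding mult_U_inv_mat[OF carrier_U_mat(1) i]
    by (rule eq_matI) (use i x in \<open>auto simp: U_mat_def field_simps\<close>)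
  show "U_inv_mat n i x * U_mat n i x = 1\<^sub>m n"
    unfolding mult_U_mat[OF carrier_U_mat(2) i]
    by (rule eq_matI) (use i x in \<open>auto simp: U_inv_mat_def field_simps\<close>)
qed

lemma U_pow_Units:
  assumes "1 \<le> i" "i < n" "x \<noteq> 0"
  shows "U_pow n i s x \<in> Units (ring_mat TYPE('a::field) n b)"
proof -
  have "U_mat n i x \<in> Units (ring_mat TYPE('a) n b)" "U_inv_mat n i x \<in> Units (ring_mat TYPE('a) n b)"
    using U_mat_mult_U_inv_mat[OF assms] by (auto simp: Units_def ring_mat_simps)
  then show ?thesis by (simp add: U_pow_def)
qed

lemma gassner_aux_Units:
  assumes "valid_braid_word n w" and "\<forall>p\<in>{1..n}. pos p \<in> {1..n}"
    and t: "\<forall>i\<in>{1..n}. t i \<noteq> 0"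
  shows "gassner_aux n t pos w \<in> Units (ring_mat TYPE('a::field) n b)"
  using assms(1,2)
proof (induction w arbitrary: pos)
  have M: "monoid (ring_mat TYPE('a) n b)"
    by (rule semiring.axioms(2)[OF semiring_mat])
  {
    case Nil
    show ?case using monoid.Units_one_closed[OF M] by (simp add: ring_mat_simps)
  next
    case (Cons a w)
    obtain i s where a: "a = (i, s)" by (cases a)
    have i: "1 \<le> i" "i < n" and w: "valid_braid_word n w"
      using Cons.prems(1) a by (auto simp: valid_braid_word_def)
    have "U_pow n i s (t (over_strand pos i s)) \<in> Units (ring_mat TYPE('a) n b)"
      using t over_strand_in[OF Cons.prems(2) i] by (intro U_pow_Units[OF i]) auto
    from monoid.Units_m_closed[OF M this
        Cons.IH[OF w cross_pos_maps_into[OF Cons.prems(2) i]]]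
    show ?case by (simp add: a ring_mat_simps)
  }
qed

theorem mainTheorem1:
  fixes n :: nat and t :: "nat \<Rightarrow> 'a::field" and w :: braid_word
  assumes "n \<ge> 1"
    and "valid_braid_word n w"
    and "\<forall>i\<in>{1..n}. t i \<noteq> 0 \<and> t i \<noteq> 1"
  shows "\<exists>G. mat_inverse (gassner n t w) = Some G \<and>
           Omega n t (induced_perm w) * G =
             transpose_mat (gassner n (\<lambda>i. inverse (t i)) w) * Omega n t id"
proof -
  let ?g = "gassner n t w" and ?gb = "gassner n (\<lambda>i. inverse (t i)) w"
  have id: "\<forall>p\<in>{1..n}. id p \<in> {1..n}" by simp
  have g: "?g \<in> carrier_mat n n" and gb: "?gb \<in> carrier_mat n n"
    by (simp_all add: gassner_def)
  have "?g \<in> Units (ring_mat TYPE('a) n ())"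
    unfolding gassner_def using assms(3) by (intro gassner_aux_Units[OF assms(2) id]) auto
  then obtain G where G: "mat_inverse ?g = Some G"
    using mat_inverse(1)[OF g, of "()"] by (cases "mat_inverse ?g") auto
  then have gG: "?g * G = 1\<^sub>m n" and "G \<in> carrier_mat n n"
    using mat_inverse(2)[OF g] by auto
  have "Omega n t (induced_perm w) = transpose_mat ?gb * Omega n t id * ?g"
    unfolding induced_perm_def gassner_def by (rule Omega_positions_after[OF assms(2) id assms(3)])
  also have "\<dots> * G = transpose_mat ?gb * Omega n t id * (?g * G)"
    using g gb \<open>G \<in> carrier_mat n n\<close> by (intro assoc_mult_mat[of _ n n _ n _ n]) auto
  also have "\<dots> = transpose_mat ?gb * Omega n t id"
    using gb by (simp add: gG)
  finally show ?thesis using G by blast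
qed

end
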